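(* Let $C$ denote the middle-thirds Cantor set. Then: (1) Every $u \in [0,1]$ can be written as $u = x^2 y$ for some $x,y \in C$. (2) The set of quotients from $C$ is \[ \left\{ \frac xy : x,y \in C,\ y \neq 0\right\} = \bigcup_{m=-\infty}^{\infty} \left[\tfrac23 \cdot 3^m, \tfrac32 \cdot 3^m\right]. \] (3) The set $\{xy : x,y \in C\}$ is a closed subset of $[0,1]$ whose Lebesgue measure is strictly greater than $\tfrac{17}{21}$.
   Context: The Cantor set is $C = \left\{\sum_{k=1}^\infty \alpha_k 3^{-k} : \alpha_k \in \{0,2\} \text{ for all } k\right\}$, i.e. the set of $x\in[0,1]$ admitting a ternary expansion using only the digits $0$ and $2$. *)

theory Defs
  imports "HOL-Analysis.Analysis"
begin

text \<open>Middle-thirds Cantor set: numbers sum_{k>=1} alpha_k 3^{-k} with alpha_k in {0,2}.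
  The digit sequence is indexed from 0 here, so digit alpha k carries weight 3^{-(k+1)}.\<close>
definition cantor_set :: "real set" where
  "cantor_set = {x. \<exists>\<alpha>::nat \<Rightarrow> real. (\<forall>k. \<alpha> k \<in> {0, 2}) \<and>
                      x = (\<Sum>k. \<alpha> k / 3 ^ (Suc k))}"

end

theory Submission
  imports Defs
begin

text \<open>Call \<open>[a, a + s]\<close> a Cantor interval if the Cantor set meets it in the copy \<open>a + s C\<close>.
  Let \<open>f\<close> be continuous and let \<open>u\<close> lie between the values of \<open>f\<close> at the lower left and the
  upper right corner of a square \<open>I \<times> J\<close> of two Cantor intervals. If the value ranges of the
  four corner subsquares \<open>I\<^sub>i \<times> J\<^sub>j\<close> (thirds of \<open>I\<close> and \<open>J\<close>) overlap, \<open>u\<close> is again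
  bracketed by one of them; iterating and passing to the limit yields \<open>x, y \<in> C\<close> with
  \<open>f x y = u\<close>. For \<open>x\<^sup>2 y\<close> on \<open>[2/3, 1]\<^sup>2\<close> this gives (1) after scaling by powers of 3;
  for \<open>x + r y\<close>, with the symmetry \<open>y \<mapsto> 1 - y\<close>, it gives every ratio in \<open>[2/3, 3/2]\<close> and
  hence (2). For \<open>x y\<close> it shows that products from the two outer thirds of a Cantor interval
  \<open>[a, a + s]\<close> fill an interval; by self-similarity the products from \<open>[a, a + s]\<^sup>2\<close> then
  have measure at least \<open>2 a s + 6 s\<^sup>2 / 7\<close>, which is \<open>34/63\<close> for \<open>[2/3, 1]\<close>. One explicit
  gap among the products makes this strict, and since the product set \<open>P\<close> contains both the
  products \<open>E\<close> from \<open>[2/3, 1]\<^sup>2\<close> and the disjoint copy \<open>P / 3\<close>, its measure is at least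
  \<open>3/2 \<mu>(E) > 17/21\<close>.\<close>

section \<open>Ternary expansions and self-similarity\<close>

definition ternary_value :: "(nat \<Rightarrow> real) \<Rightarrow> real" where
  "ternary_value \<alpha> = (\<Sum>k. \<alpha> k / 3 ^ Suc k)"

definition cantor_digits :: "(nat \<Rightarrow> real) \<Rightarrow> bool" where
  "cantor_digits \<alpha> \<longleftrightarrow> (\<forall>k. \<alpha> k \<in> {0, 2})"

lemma cantor_set_eq_ternary_values:
  "cantor_set = {ternary_value \<alpha> | \<alpha>. cantor_digits \<alpha>}"
  by (auto simp: cantor_set_def cantor_digits_def ternary_value_def)

lemma sums_two_over_powers_of_three: "(\<lambda>k. 2 / 3 ^ Suc k :: real) sums 1"
proof -
  have "(\<lambda>k. 2/3 * (1/3::real) ^ k) sums (2/3 * (1 / (1 - 1/3)))"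
    by (intro sums_mult geometric_sums) simp
  then show ?thesis
    by (simp add: power_divide)
qed

lemma cantor_digit_term_bounds:
  "cantor_digits \<alpha> \<Longrightarrow> 0 \<le> \<alpha> k / 3 ^ Suc k \<and> \<alpha> k / 3 ^ Suc k \<le> 2 / 3 ^ Suc k"
  unfolding cantor_digits_def by (cases "\<alpha> k = 0") (auto simp del: power_Suc)

lemma summable_cantor_digits:
  "cantor_digits \<alpha> \<Longrightarrow> summable (\<lambda>k. \<alpha> k / 3 ^ Suc k)"
proof (rule summable_comparison_test'[OF sums_summable[OF sums_two_over_powers_of_three]])
  fix n
  assume "cantor_digits \<alpha>"
  then have "0 \<le> \<alpha> n / 3 ^ Suc n" "\<alpha> n / 3 ^ Suc n \<le> 2 / 3 ^ Suc n"
    using cantor_digit_term_bounds by blast+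
  then show "norm (\<alpha> n / 3 ^ Suc n) \<le> 2 / 3 ^ Suc n"
    by (simp only: real_norm_def abs_of_nonneg)
qed

lemma ternary_value_bounds:
  assumes "cantor_digits \<alpha>"
  shows "0 \<le> ternary_value \<alpha>" "ternary_value \<alpha> \<le> 1"
proof -
  show "0 \<le> ternary_value \<alpha>"
    unfolding ternary_value_def
    by (rule suminf_nonneg[OF summable_cantor_digits[OF assms]])
       (use assms cantor_digit_term_bounds in auto)
  have "ternary_value \<alpha> \<le> (\<Sum>k. 2 / 3 ^ Suc k)"
    unfolding ternary_value_def
    by (rule suminf_le[OF _ summable_cantor_digits[OF assms]
          sums_summable[OF sums_two_over_powers_of_three]])
       (use assms cantor_digit_term_bounds in auto)
  then show "ternary_value \<alpha> \<le> 1"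
    using sums_unique[OF sums_two_over_powers_of_three] by simp
qed

lemma ternary_value_Suc_shift:
  assumes "cantor_digits \<alpha>"
  shows "ternary_value \<alpha> = (\<alpha> 0 + ternary_value (\<lambda>k. \<alpha> (Suc k))) / 3"
proof -
  have tail: "cantor_digits (\<lambda>k. \<alpha> (Suc k))"
    using assms by (simp add: cantor_digits_def)
  have "(\<Sum>k. \<alpha> (Suc k) / 3 ^ Suc (Suc k)) = ternary_value \<alpha> - \<alpha> 0 / 3"
    using suminf_split_head[OF summable_cantor_digits[OF assms]]
    by (simp add: ternary_value_def)
  moreover have "(\<Sum>k. \<alpha> (Suc k) / 3 ^ Suc (Suc k)) = ternary_value (\<lambda>k. \<alpha> (Suc k)) / 3"
    using suminf_divide[OF summable_cantor_digits[OF tail], of 3]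
    by (simp add: ternary_value_def field_simps)
  ultimately show ?thesis
    by (simp add: field_simps)
qed

lemma cantor_set_self_similar:
  "x \<in> cantor_set \<longleftrightarrow> (\<exists>y\<in>cantor_set. x = y / 3 \<or> x = (2 + y) / 3)"
proof
  assume "x \<in> cantor_set"
  then obtain \<alpha> where \<alpha>: "cantor_digits \<alpha>" "x = ternary_value \<alpha>"
    by (auto simp: cantor_set_eq_ternary_values)
  have "ternary_value (\<lambda>k. \<alpha> (Suc k)) \<in> cantor_set"
    using \<alpha>(1) by (auto simp: cantor_set_eq_ternary_values cantor_digits_def)
  moreover have "\<alpha> 0 = 0 \<or> \<alpha> 0 = 2"
    using \<alpha>(1) by (auto simp: cantor_digits_def)
  ultimately show "\<exists>y\<in>cantor_set. x = y / 3 \<or> x = (2 + y) / 3"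
    using ternary_value_Suc_shift[OF \<alpha>(1)] \<alpha>(2) by auto
next
  assume "\<exists>y\<in>cantor_set. x = y / 3 \<or> x = (2 + y) / 3"
  then obtain c y where y: "y \<in> cantor_set" "c = 0 \<or> c = 2" "x = (c + y) / 3"
    by force
  then obtain \<beta> where \<beta>: "cantor_digits \<beta>" "y = ternary_value \<beta>"
    by (auto simp: cantor_set_eq_ternary_values)
  define \<alpha> where "\<alpha> k = (case k of 0 \<Rightarrow> c | Suc j \<Rightarrow> \<beta> j)" for k
  have \<alpha>: "cantor_digits \<alpha>"
    using \<beta>(1) y(2) by (auto simp: cantor_digits_def \<alpha>_def split: nat.split)
  have "x = ternary_value \<alpha>"
    using ternary_value_Suc_shift[OF \<alpha>] \<beta>(2) y(3) by (simp add: \<alpha>_def)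
  with \<alpha> show "x \<in> cantor_set"
    by (auto simp: cantor_set_eq_ternary_values)
qed

lemma cantor_set_subset_unit: "cantor_set \<subseteq> {0..1}"
  using ternary_value_bounds by (auto simp: cantor_set_eq_ternary_values)

lemma cantor_set_gap: "x \<in> cantor_set \<Longrightarrow> x \<le> 1/3 \<or> 2/3 \<le> x"
  using cantor_set_self_similar[of x] cantor_set_subset_unit by fastforce

lemma cantor_set_div3: "x \<in> cantor_set \<Longrightarrow> x / 3 \<in> cantor_set"
  using cantor_set_self_similar by blast

lemma cantor_set_div_power: "x \<in> cantor_set \<Longrightarrow> x / 3 ^ k \<in> cantor_set"
  by (induction k) (auto dest: cantor_set_div3 simp: field_simps)

lemma cantor_set_lower_third:
  "x \<in> cantor_set \<Longrightarrow> x \<le> 1/3 \<Longrightarrow> 3 * x \<in> cantor_set"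
  using cantor_set_self_similar[of x] cantor_set_subset_unit by fastforce

lemma cantor_set_upper_third:
  assumes "x \<in> cantor_set" "2/3 \<le> x"
  shows "3 * x - 2 \<in> cantor_set"
proof -
  obtain y where y: "y \<in> cantor_set" "x = y / 3 \<or> x = (2 + y) / 3"
    using assms(1) cantor_set_self_similar by blast
  moreover have "y \<le> 1"
    using y(1) cantor_set_subset_unit by auto
  ultimately have "3 * x - 2 = y"
    using assms(2) by auto
  with y(1) show ?thesis
    by simp
qed

lemma cantor_set_add2_div3: "y \<in> cantor_set \<Longrightarrow> (2 + y) / 3 \<in> cantor_set"
  using cantor_set_self_similar by blast

lemma zero_in_cantor_set: "0 \<in> cantor_set"
proof -
  have "cantor_digits (\<lambda>_. 0)" "ternary_value (\<lambda>_. 0) = 0"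
    by (simp_all add: cantor_digits_def ternary_value_def)
  then show ?thesis
    unfolding cantor_set_eq_ternary_values by force
qed

lemma cantor_set_reflect: "x \<in> cantor_set \<Longrightarrow> 1 - x \<in> cantor_set"
proof -
  assume "x \<in> cantor_set"
  then obtain \<alpha> where \<alpha>: "cantor_digits \<alpha>" "x = ternary_value \<alpha>"
    by (auto simp: cantor_set_eq_ternary_values)
  have "(\<lambda>k. 2 / 3 ^ Suc k - \<alpha> k / 3 ^ Suc k) sums (1 - x)"
    using sums_diff[OF sums_two_over_powers_of_three summable_sums[OF summable_cantor_digits[OF \<alpha>(1)]]]
    by (simp add: \<alpha>(2) ternary_value_def)
  then have "ternary_value (\<lambda>k. 2 - \<alpha> k) = 1 - x"
    unfolding ternary_value_def by (simp add: diff_divide_distrib sums_iff)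
  moreover have "cantor_digits (\<lambda>k. 2 - \<alpha> k)"
    using \<alpha>(1) by (auto simp: cantor_digits_def)
  ultimately show ?thesis
    unfolding cantor_set_eq_ternary_values by force
qed

lemma one_in_cantor_set: "1 \<in> cantor_set"
  using cantor_set_reflect[OF zero_in_cantor_set] by simp

section \<open>Compactness\<close>

primrec cantor_level :: "nat \<Rightarrow> real set" where
  "cantor_level 0 = {0..1}"
| "cantor_level (Suc n) = (\<lambda>y. y / 3) ` cantor_level n \<union> (\<lambda>y. (2 + y) / 3) ` cantor_level n"

lemma compact_cantor_level: "compact (cantor_level n)"
proof (induction n)
  case (Suc n)
  have "compact ((\<lambda>y. y / 3) ` cantor_level n)" "compact ((\<lambda>y. (2 + y) / 3) ` cantor_level n)"
    by (intro compact_continuous_image[OF _ Suc] continuous_intros; simp)+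
  then show ?case
    by (simp add: compact_Un)
qed simp

lemma cantor_level_subset_unit: "cantor_level n \<subseteq> {0..1}"
  by (induction n) auto

lemma cantor_set_subset_level: "cantor_set \<subseteq> cantor_level n"
proof (induction n)
  case 0
  then show ?case
    using cantor_set_subset_unit by simp
next
  case (Suc n)
  show ?case
  proof
    fix x
    assume "x \<in> cantor_set"
    then obtain y where "y \<in> cantor_set" "x = y / 3 \<or> x = (2 + y) / 3"
      using cantor_set_self_similar[of x] by blast
    with Suc show "x \<in> cantor_level (Suc n)"
      by auto
  qed
qed

lemma in_all_cantor_levels_scale:
  assumes "\<forall>n. x \<in> cantor_level n"
  shows "\<forall>n. (if x \<le> 1/3 then 3 * x else 3 * x - 2) \<in> cantor_level n"
proof
  fix n
  obtain y where y: "y \<in> cantor_level n" "x = y / 3 \<or> x = (2 + y) / 3"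
    using assms[rule_format, of "Suc n"] by auto
  moreover have "y \<in> {0..1}"
    using y(1) cantor_level_subset_unit by blast
  ultimately have "(if x \<le> 1/3 then 3 * x else 3 * x - 2) = y"
    by auto
  with y(1) show "(if x \<le> 1/3 then 3 * x else 3 * x - 2) \<in> cantor_level n"
    by simp
qed

text \<open>A point lying in every level is expanded digit by digit: the orbit of \<open>x\<close> under
  \<open>z \<mapsto> 3z\<close> resp. \<open>z \<mapsto> 3z - 2\<close> stays in \<open>[0,1]\<close>, so the remainders \<open>z\<^sub>k / 3\<^sup>k\<close> vanish.\<close>
lemma in_all_cantor_levels_imp_cantor_set:
  assumes "\<forall>n. x \<in> cantor_level n"
  shows "x \<in> cantor_set"
proof -
  define step :: "real \<Rightarrow> real" where "step z = (if z \<le> 1/3 then 3 * z else 3 * z - 2)" for z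
  define z :: "nat \<Rightarrow> real" where "z k = (step ^^ k) x" for k
  define d :: "nat \<Rightarrow> real" where "d k = (if z k \<le> 1/3 then 0 else 2)" for k
  have z_Suc: "z (Suc k) = step (z k)" for k
    by (simp add: z_def)
  have levels: "\<forall>n. z k \<in> cantor_level n" for k
  proof (induction k)
    case 0
    then show ?case
      using assms by (simp add: z_def)
  next
    case (Suc k)
    then show ?case
      unfolding z_Suc step_def by (rule in_all_cantor_levels_scale)
  qed
  have z_bounds: "0 \<le> z k \<and> z k \<le> 1" for k
  proof -
    have "z k \<in> cantor_level 0"
      using levels by blast
    then show ?thesis
      by simp
  qed
  have digits: "cantor_digits d"
    by (simp add: cantor_digits_def d_def)
  have partial: "x = (\<Sum>i<k. d i / 3 ^ Suc i) + z k / 3 ^ k" for k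
  proof (induction k)
    case 0
    then show ?case
      by (simp add: z_def)
  next
    case (Suc k)
    have "z k = d k / 3 + z (Suc k) / 3"
      unfolding z_Suc step_def d_def by (cases "z k \<le> 1/3") (simp_all add: field_simps)
    then have "z k / 3 ^ k = d k / 3 ^ Suc k + z (Suc k) / 3 ^ Suc k"
      by (simp add: field_simps)
    with Suc show ?case
      by simp
  qed
  have "(\<lambda>k. (\<Sum>i<k. d i / 3 ^ Suc i) + z k / 3 ^ k) \<longlonglongrightarrow> ternary_value d + 0"
  proof (intro tendsto_add)
    show "(\<lambda>k. \<Sum>i<k. d i / 3 ^ Suc i) \<longlonglongrightarrow> ternary_value d"
      unfolding ternary_value_def by (rule summable_LIMSEQ[OF summable_cantor_digits[OF digits]])
    have "norm (z k / 3 ^ k) \<le> inverse (3 ^ k)" for k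
      using z_bounds[of k] by (simp add: divide_inverse mult_left_le_one_le)
    then show "(\<lambda>k. z k / 3 ^ k) \<longlonglongrightarrow> 0"
      by (intro Lim_null_comparison[OF always_eventually LIMSEQ_inverse_realpow_zero]) auto
  qed
  then have "x = ternary_value d"
    unfolding partial[symmetric] by (simp add: LIMSEQ_const_iff)
  with digits show ?thesis
    by (auto simp: cantor_set_eq_ternary_values)
qed

lemma cantor_set_eq_Inter_levels: "cantor_set = (\<Inter>n. cantor_level n)"
  using cantor_set_subset_level in_all_cantor_levels_imp_cantor_set by blast

lemma compact_cantor_set: "compact cantor_set"
proof -
  have "closed cantor_set"
    unfolding cantor_set_eq_Inter_levels
    by (intro closed_INT) (simp add: compact_imp_closed compact_cantor_level)
  moreover have "bounded cantor_set"
    using cantor_set_subset_unit by (rule bounded_subset[rotated]) simp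
  ultimately show ?thesis
    by (simp add: compact_eq_bounded_closed)
qed

section \<open>Cantor intervals and squares\<close>

definition cantor_interval :: "real \<Rightarrow> real \<Rightarrow> bool" where
  "cantor_interval a s \<longleftrightarrow> 0 < s \<and> cantor_set \<inter> {a..a + s} = (\<lambda>y. a + s * y) ` cantor_set"

lemma cantor_interval_unit: "cantor_interval 0 1"
  using cantor_set_subset_unit by (auto simp: cantor_interval_def)

lemma cantor_interval_pos: "cantor_interval a s \<Longrightarrow> 0 < s"
  by (simp add: cantor_interval_def)

lemma cantor_interval_memI: "cantor_interval a s \<Longrightarrow> y \<in> cantor_set \<Longrightarrow> a + s * y \<in> cantor_set"
  by (auto simp: cantor_interval_def)

lemma cantor_interval_memE:
  assumes "cantor_interval a s" "x \<in> cantor_set" "a \<le> x" "x \<le> a + s"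
  obtains y where "y \<in> cantor_set" "x = a + s * y"
proof -
  have "x \<in> cantor_set \<inter> {a..a + s}"
    using assms(2-4) by simp
  with assms(1) have "x \<in> (\<lambda>y. a + s * y) ` cantor_set"
    by (simp add: cantor_interval_def)
  with that show ?thesis
    by blast
qed

lemma cantor_interval_endpoints:
  "cantor_interval a s \<Longrightarrow> a \<in> cantor_set \<and> a + s \<in> cantor_set"
  using cantor_interval_memI[of a s 0] cantor_interval_memI[of a s 1]
  by (simp add: zero_in_cantor_set one_in_cantor_set)

lemma cantor_interval_image_subset:
  "cantor_interval a s \<Longrightarrow> y \<in> cantor_set \<Longrightarrow> a \<le> a + s * y \<and> a + s * y \<le> a + s"
  using cantor_set_subset_unit by (auto simp: cantor_interval_def)

lemma cantor_interval_gap: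
  assumes "cantor_interval a s" "x \<in> cantor_set" "a \<le> x" "x \<le> a + s"
  shows "x \<le> a + s / 3 \<or> a + 2 * s / 3 \<le> x"
proof -
  obtain y where y: "y \<in> cantor_set" "x = a + s * y"
    using cantor_interval_memE[OF assms] .
  have s: "0 \<le> s"
    using cantor_interval_pos[OF assms(1)] by simp
  from cantor_set_gap[OF y(1)] show ?thesis
  proof
    assume "y \<le> 1/3"
    then have "s * y \<le> s * (1/3)"
      using s by (rule mult_left_mono)
    then show ?thesis
      using y(2) by simp
  next
    assume "2/3 \<le> y"
    then have "s * (2/3) \<le> s * y"
      using s by (rule mult_left_mono)
    then show ?thesis
      using y(2) by simp
  qed
qed

lemma cantor_interval_left:
  assumes "cantor_interval a s"
  shows "cantor_interval a (s / 3)"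
proof -
  have s: "0 < s"
    using assms by (rule cantor_interval_pos)
  have "x \<in> (\<lambda>y. a + s / 3 * y) ` cantor_set"
    if x: "x \<in> cantor_set" "a \<le> x" "x \<le> a + s / 3" for x
  proof -
    obtain y where y: "y \<in> cantor_set" "x = a + s * y"
      using cantor_interval_memE[OF assms x(1,2)] x(3) s by auto
    then have "s * y \<le> s * (1/3)"
      using x(3) by simp
    then have "y \<le> 1/3"
      using s by (rule mult_left_le_imp_le)
    then have "3 * y \<in> cantor_set"
      using y(1) by (rule cantor_set_lower_third[rotated])
    moreover have "x = a + s / 3 * (3 * y)"
      using y(2) by simp
    ultimately show ?thesis
      by blast
  qed
  moreover have "a + s / 3 * y \<in> cantor_set \<inter> {a..a + s / 3}" if "y \<in> cantor_set" for y
    using cantor_interval_memI[OF assms cantor_set_div3[OF that]]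
      cantor_interval_image_subset[OF cantor_interval_unit that] s
    by (auto simp: mult_le_cancel_left_pos)
  ultimately show ?thesis
    using s unfolding cantor_interval_def by (intro conjI equalityI subsetI) auto
qed

lemma cantor_interval_right:
  assumes "cantor_interval a s"
  shows "cantor_interval (a + 2 * s / 3) (s / 3)"
proof -
  have s: "0 < s"
    using assms by (rule cantor_interval_pos)
  have "x \<in> (\<lambda>y. a + 2 * s / 3 + s / 3 * y) ` cantor_set"
    if x: "x \<in> cantor_set" "a + 2 * s / 3 \<le> x" "x \<le> a + 2 * s / 3 + s / 3" for x
  proof -
    have "a \<le> x" "x \<le> a + s"
      using x(2,3) s by linarith+
    then obtain y where y: "y \<in> cantor_set" "x = a + s * y"
      using cantor_interval_memE[OF assms x(1)] by blast
    then have "s * (2/3) \<le> s * y"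
      using x(2) by linarith
    then have "2/3 \<le> y"
      using s by (rule mult_left_le_imp_le)
    then have "3 * y - 2 \<in> cantor_set"
      using y(1) by (rule cantor_set_upper_third[rotated])
    moreover have "x = a + 2 * s / 3 + s / 3 * (3 * y - 2)"
      using y(2) by (simp add: algebra_simps)
    ultimately show ?thesis
      by blast
  qed
  moreover have "a + 2 * s / 3 + s / 3 * y \<in> cantor_set \<inter> {a + 2 * s / 3..a + 2 * s / 3 + s / 3}"
    if y: "y \<in> cantor_set" for y
  proof (intro IntI)
    have "a + s * ((2 + y) / 3) \<in> cantor_set"
      using cantor_interval_memI[OF assms cantor_set_add2_div3[OF y]] .
    moreover have "a + s * ((2 + y) / 3) = a + 2 * s / 3 + s / 3 * y"
      by (simp add: algebra_simps)
    ultimately show "a + 2 * s / 3 + s / 3 * y \<in> cantor_set"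
      by metis
    have "0 \<le> y" "y \<le> 1"
      using y cantor_set_subset_unit by auto
    then have "0 \<le> s / 3 * y" "s / 3 * y \<le> s / 3"
      using s by (simp_all add: mult_left_le)
    then show "a + 2 * s / 3 + s / 3 * y \<in> {a + 2 * s / 3..a + 2 * s / 3 + s / 3}"
      by simp
  qed
  ultimately show ?thesis
    using s unfolding cantor_interval_def by (intro conjI equalityI subsetI) auto
qed

lemma cantor_interval_child:
  "cantor_interval a s \<Longrightarrow> i = 0 \<or> i = 2 \<Longrightarrow> cantor_interval (a + i * (s / 3)) (s / 3)"
  using cantor_interval_left[of a s] cantor_interval_right[of a s] by auto

lemma nested_cantor_intervals_limit:
  fixes A :: "nat \<Rightarrow> real"
  assumes intervals: "\<And>n. cantor_interval (A n) (s / 3 ^ n)"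
    and nested: "\<And>n. A n \<le> A (Suc n)" "\<And>n. A (Suc n) + s / 3 ^ Suc n \<le> A n + s / 3 ^ n"
  obtains x where "x \<in> cantor_set" "A \<longlonglongrightarrow> x" "(\<lambda>n. A n + s / 3 ^ n) \<longlonglongrightarrow> x"
    "\<And>n. A n \<le> x" "\<And>n. x \<le> A n + s / 3 ^ n"
proof -
  have "(\<lambda>n. s / 3 ^ n) \<longlonglongrightarrow> 0"
    by (intro LIMSEQ_divide_realpow_zero) simp
  then have "(\<lambda>n. A n - (A n + s / 3 ^ n)) \<longlonglongrightarrow> 0"
    using tendsto_minus by fastforce
  moreover have "A n \<le> A n + s / 3 ^ n" for n
    using cantor_interval_pos[OF intervals] by (simp add: less_imp_le)
  ultimately obtain x where x: "\<forall>n. A n \<le> x" "A \<longlonglongrightarrow> x"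
    "\<forall>n. x \<le> A n + s / 3 ^ n" "(\<lambda>n. A n + s / 3 ^ n) \<longlonglongrightarrow> x"
    using nested_sequence_unique[of A "\<lambda>n. A n + s / 3 ^ n"] nested by blast
  moreover have "x \<in> cantor_set"
    using closed_sequentially[OF compact_imp_closed[OF compact_cantor_set] _ x(2)]
      cantor_interval_endpoints[OF intervals] by blast
  ultimately show ?thesis
    using that by blast
qed

text \<open>The hypotheses say that the value ranges of the four corner subsquares of side \<open>t\<close>, taken in
  the order \<open>(0, 0), (0, 2), (2, 0), (2, 2)\<close>, overlap consecutively.\<close>
lemma subsquare_containing_value:
  fixes f :: "real \<Rightarrow> real \<Rightarrow> real"
  assumes u: "f a b \<le> u" "u \<le> f (a + 3 * t) (b + 3 * t)"
    and overlaps: "f a (b + 2 * t) \<le> f (a + t) (b + t)" "f (a + 2 * t) b \<le> f (a + t) (b + 3 * t)"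
      "f (a + 2 * t) (b + 2 * t) \<le> f (a + 3 * t) (b + t)"
  shows "\<exists>i j. (i = 0 \<or> i = 2) \<and> (j = 0 \<or> j = (2::real)) \<and>
           f (a + i * t) (b + j * t) \<le> u \<and> u \<le> f (a + i * t + t) (b + j * t + t)"
proof -
  have e: "a + 2 * t + t = a + 3 * t" "b + 2 * t + t = b + 3 * t"
    by simp_all
  consider "u \<le> f (a + t) (b + t)" | "f (a + t) (b + t) < u" "u \<le> f (a + t) (b + 3 * t)"
    | "f (a + t) (b + 3 * t) < u" "u \<le> f (a + 3 * t) (b + t)" | "f (a + 3 * t) (b + t) < u"
    by linarith
  then show ?thesis
  proof cases
    case 1
    then show ?thesis
      using u by (intro exI[of _ 0] exI[of _ 0]) simp
  next
    case 2
    then show ?thesis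
      using overlaps by (intro exI[of _ 0] exI[of _ 2]) (simp add: e)
  next
    case 3
    then show ?thesis
      using overlaps by (intro exI[of _ 2] exI[of _ 0]) (simp add: e)
  next
    case 4
    then show ?thesis
      using overlaps u by (intro exI[of _ 2] exI[of _ 2]) (simp add: e)
  qed
qed

lemma nested_cantor_squares:
  fixes f :: "real \<Rightarrow> real \<Rightarrow> real"
  assumes intervals: "cantor_interval a0 s0" "cantor_interval b0 s0"
    and u: "f a0 b0 \<le> u" "u \<le> f (a0 + s0) (b0 + s0)"
    and overlaps: "\<And>a b t. a0 \<le> a \<Longrightarrow> a + 3 * t \<le> a0 + s0 \<Longrightarrow> b0 \<le> b \<Longrightarrow> b + 3 * t \<le> b0 + s0 \<Longrightarrow>
        0 < t \<Longrightarrow> f a (b + 2 * t) \<le> f (a + t) (b + t) \<and> f (a + 2 * t) b \<le> f (a + t) (b + 3 * t) \<and>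
          f (a + 2 * t) (b + 2 * t) \<le> f (a + 3 * t) (b + t)"
  obtains A B where "\<And>n. cantor_interval (A n) (s0 / 3 ^ n)" "\<And>n. cantor_interval (B n) (s0 / 3 ^ n)"
    "\<And>n. A n \<le> A (Suc n)" "\<And>n. A (Suc n) + s0 / 3 ^ Suc n \<le> A n + s0 / 3 ^ n"
    "\<And>n. B n \<le> B (Suc n)" "\<And>n. B (Suc n) + s0 / 3 ^ Suc n \<le> B n + s0 / 3 ^ n"
    "A 0 = a0" "B 0 = b0" "\<And>n. f (A n) (B n) \<le> u" "\<And>n. u \<le> f (A n + s0 / 3 ^ n) (B n + s0 / 3 ^ n)"
proof -
  define P where "P n p \<longleftrightarrow>
      cantor_interval (fst p) (s0 / 3 ^ n) \<and> cantor_interval (snd p) (s0 / 3 ^ n) \<and>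
      a0 \<le> fst p \<and> fst p + s0 / 3 ^ n \<le> a0 + s0 \<and> b0 \<le> snd p \<and> snd p + s0 / 3 ^ n \<le> b0 + s0 \<and>
      f (fst p) (snd p) \<le> u \<and> u \<le> f (fst p + s0 / 3 ^ n) (snd p + s0 / 3 ^ n)" for n p
  define R where "R n p q \<longleftrightarrow>
      fst p \<le> fst q \<and> fst q + s0 / 3 ^ Suc n \<le> fst p + s0 / 3 ^ n \<and>
      snd p \<le> snd q \<and> snd q + s0 / 3 ^ Suc n \<le> snd p + s0 / 3 ^ n" for n p q
  have refine: "\<exists>q. P (Suc n) q \<and> R n p q" if Pnp: "P n p" for n p
  proof -
    obtain a b where p: "p = (a, b)"
      by fastforce
    define t where "t = s0 / 3 ^ Suc n"
    have t: "s0 / 3 ^ n = 3 * t"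
      by (simp add: t_def)
    have "0 < t"
      using cantor_interval_pos[of a "s0 / 3 ^ n"] Pnp by (simp add: P_def p t)
    then obtain i j where ij: "i = 0 \<or> i = 2" "j = 0 \<or> j = (2::real)"
      "f (a + i * t) (b + j * t) \<le> u" "u \<le> f (a + i * t + t) (b + j * t + t)"
      using subsquare_containing_value[of f a b u t] overlaps[of a t b] Pnp
      by (auto simp: P_def p t)
    have "cantor_interval (a + i * t) t" "cantor_interval (b + j * t) t"
      using cantor_interval_child[of _ "3 * t"] ij(1,2) Pnp by (auto simp: P_def p t)
    moreover have "a \<le> a + i * t" "a + i * t + t \<le> a + 3 * t" "b \<le> b + j * t" "b + j * t + t \<le> b + 3 * t"
      using ij(1,2) \<open>0 < t\<close> by auto
    ultimately show ?thesis
      using Pnp ij(3,4) unfolding P_def R_def p t_def[symmetric] t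
      by (intro exI[of _ "(a + i * t, b + j * t)"]) auto
  qed
  have "P 0 (a0, b0)"
    using intervals u by (simp add: P_def)
  then obtain g where g: "\<And>n. P n (g n)" "\<And>n. R n (g n) (g (Suc n))"
    using dependent_nat_choice[of P R] refine by blast
  have "fst (g 0) = a0" "snd (g 0) = b0"
    using g(1)[of 0] by (auto simp: P_def)
  then show ?thesis
    by (intro that[of "\<lambda>n. fst (g n)" "\<lambda>n. snd (g n)"]) (use g in \<open>simp_all add: P_def R_def\<close>)
qed

lemma cantor_squares_attain_value:
  fixes f :: "real \<Rightarrow> real \<Rightarrow> real"
  assumes cont: "continuous_on UNIV (\<lambda>p. f (fst p) (snd p))"
    and intervals: "cantor_interval a0 s0" "cantor_interval b0 s0"
    and u: "f a0 b0 \<le> u" "u \<le> f (a0 + s0) (b0 + s0)"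
    and overlaps: "\<And>a b t. a0 \<le> a \<Longrightarrow> a + 3 * t \<le> a0 + s0 \<Longrightarrow> b0 \<le> b \<Longrightarrow> b + 3 * t \<le> b0 + s0 \<Longrightarrow>
        0 < t \<Longrightarrow> f a (b + 2 * t) \<le> f (a + t) (b + t) \<and> f (a + 2 * t) b \<le> f (a + t) (b + 3 * t) \<and>
          f (a + 2 * t) (b + 2 * t) \<le> f (a + 3 * t) (b + t)"
  shows "\<exists>x\<in>cantor_set. \<exists>y\<in>cantor_set. a0 \<le> x \<and> x \<le> a0 + s0 \<and> b0 \<le> y \<and> y \<le> b0 + s0 \<and> f x y = u"
proof (rule nested_cantor_squares[OF intervals u overlaps])
  fix A B :: "nat \<Rightarrow> real"
  assume nested: "\<And>n. cantor_interval (A n) (s0 / 3 ^ n)" "\<And>n. cantor_interval (B n) (s0 / 3 ^ n)"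
    and A: "\<And>n. A n \<le> A (Suc n)" "\<And>n. A (Suc n) + s0 / 3 ^ Suc n \<le> A n + s0 / 3 ^ n"
    and B: "\<And>n. B n \<le> B (Suc n)" "\<And>n. B (Suc n) + s0 / 3 ^ Suc n \<le> B n + s0 / 3 ^ n"
    and start: "A 0 = a0" "B 0 = b0"
    and bracket: "\<And>n. f (A n) (B n) \<le> u" "\<And>n. u \<le> f (A n + s0 / 3 ^ n) (B n + s0 / 3 ^ n)"
  obtain x where x: "x \<in> cantor_set" "A \<longlonglongrightarrow> x" "(\<lambda>n. A n + s0 / 3 ^ n) \<longlonglongrightarrow> x"
      "\<And>n. A n \<le> x" "\<And>n. x \<le> A n + s0 / 3 ^ n"
    by (rule nested_cantor_intervals_limit[OF nested(1) A]) (rule that)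
  obtain y where y: "y \<in> cantor_set" "B \<longlonglongrightarrow> y" "(\<lambda>n. B n + s0 / 3 ^ n) \<longlonglongrightarrow> y"
      "\<And>n. B n \<le> y" "\<And>n. y \<le> B n + s0 / 3 ^ n"
    by (rule nested_cantor_intervals_limit[OF nested(2) B]) (rule that)
  have "(\<lambda>n. f (A n) (B n)) \<longlonglongrightarrow> f x y"
    using continuous_on_tendsto_compose[OF cont tendsto_Pair[OF x(2) y(2)]] by simp
  then have "f x y \<le> u"
    by (rule LIMSEQ_le_const2) (use bracket(1) in blast)
  moreover have "(\<lambda>n. f (A n + s0 / 3 ^ n) (B n + s0 / 3 ^ n)) \<longlonglongrightarrow> f x y"
    using continuous_on_tendsto_compose[OF cont tendsto_Pair[OF x(3) y(3)]] by simp
  then have "u \<le> f x y"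
    by (rule LIMSEQ_le_const) (use bracket(2) in blast)
  moreover have "a0 \<le> x" "x \<le> a0 + s0" "b0 \<le> y" "y \<le> b0 + s0"
    using x(4,5)[of 0] y(4,5)[of 0] start by simp_all
  ultimately show ?thesis
    using x(1) y(1) by force
qed

section \<open>Values of \<open>x\<^sup>2 y\<close>\<close>

lemma exists_power_of_three_scale:
  fixes u :: real
  assumes "0 < u" "u \<le> 1"
  obtains k :: nat where "1/3 < 3 ^ k * u" "3 ^ k * u \<le> 1"
proof -
  obtain n :: nat where "1 / u < 3 ^ n"
    using real_arch_pow[of 3 "1 / u"] by auto
  then have ex: "1 < 3 ^ n * u"
    using assms by (simp add: field_simps)
  define m where "m = (LEAST n. 1 < 3 ^ n * u)"
  have m: "1 < 3 ^ m * u"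
    unfolding m_def by (rule LeastI[of _ n]) (rule ex)
  then obtain k where k: "m = Suc k"
    using assms(2) by (cases m) auto
  have "\<not> 1 < 3 ^ k * u"
    using not_less_Least[of k "\<lambda>n. 1 < 3 ^ n * u"] k unfolding m_def by simp
  moreover have "1 < 3 * (3 ^ k * u)"
    using m k by simp
  ultimately show ?thesis
    by (intro that[of k]) linarith+
qed

lemma cantor_set_normalize:
  assumes "x \<in> cantor_set" "0 < x"
  obtains k :: nat where "3 ^ k * x \<in> cantor_set" "2/3 \<le> 3 ^ k * x" "3 ^ k * x \<le> 1"
proof -
  have "x \<le> 1"
    using assms(1) cantor_set_subset_unit by auto
  then obtain k :: nat where k: "1/3 < 3 ^ k * x" "3 ^ k * x \<le> 1"
    using assms(2) exists_power_of_three_scale by blast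
  have "3 ^ j * x \<in> cantor_set" if "j \<le> k" for j
    using that
  proof (induction j)
    case (Suc j)
    have "(3::real) ^ Suc j \<le> 3 ^ k"
      using Suc.prems by (intro power_increasing) auto
    then have "3 * (3 ^ j * x) \<le> 3 ^ k * x"
      using assms(2) by simp
    then have "3 * (3 ^ j * x) \<in> cantor_set"
      using Suc k by (intro cantor_set_lower_third) auto
    then show ?case
      by (simp add: mult.assoc)
  qed (use assms in simp)
  then have "3 ^ k * x \<in> cantor_set"
    by simp
  moreover from this have "2/3 \<le> 3 ^ k * x"
    using cantor_set_gap k(1) by fastforce
  ultimately show ?thesis
    using k(2) that by blast
qed

lemma square_times_subsquare_overlaps:
  fixes a b t :: real
  assumes "0 \<le> t" "0 \<le> b" "a \<le> 2 * b" "2 * b \<le> 3 * a"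
  shows "a\<^sup>2 * (b + 2 * t) \<le> (a + t)\<^sup>2 * (b + t)"
    and "(a + 2 * t)\<^sup>2 * b \<le> (a + t)\<^sup>2 * (b + 3 * t)"
    and "(a + 2 * t)\<^sup>2 * (b + 2 * t) \<le> (a + 3 * t)\<^sup>2 * (b + t)"
proof -
  have "0 \<le> a"
    using assms by linarith
  have "(a + t)\<^sup>2 * (b + t) - a\<^sup>2 * (b + 2 * t) = t * (a * (2 * b - a) + t * (2 * a + b) + t\<^sup>2)"
    by (simp add: power2_eq_square algebra_simps)
  moreover have "0 \<le> t * (a * (2 * b - a) + t * (2 * a + b) + t\<^sup>2)"
    using assms \<open>0 \<le> a\<close> by (intro mult_nonneg_nonneg add_nonneg_nonneg) auto
  ultimately show "a\<^sup>2 * (b + 2 * t) \<le> (a + t)\<^sup>2 * (b + t)"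
    by linarith
  have "(a + t)\<^sup>2 * (b + 3 * t) - (a + 2 * t)\<^sup>2 * b = t * (a * (3 * a - 2 * b) + 3 * t * (2 * a - b) + 3 * t\<^sup>2)"
    by (simp add: power2_eq_square algebra_simps)
  moreover have "0 \<le> t * (a * (3 * a - 2 * b) + 3 * t * (2 * a - b) + 3 * t\<^sup>2)"
    using assms \<open>0 \<le> a\<close> by (intro mult_nonneg_nonneg add_nonneg_nonneg) auto
  ultimately show "(a + 2 * t)\<^sup>2 * b \<le> (a + t)\<^sup>2 * (b + 3 * t)"
    by linarith
  have "(a + 3 * t)\<^sup>2 * (b + t) - (a + 2 * t)\<^sup>2 * (b + 2 * t) = t * (a * (2 * b - a) + t * (5 * b - 2 * a) + t\<^sup>2)"
    by (simp add: power2_eq_square algebra_simps)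
  moreover have "0 \<le> t * (a * (2 * b - a) + t * (5 * b - 2 * a) + t\<^sup>2)"
    using assms \<open>0 \<le> a\<close> by (intro mult_nonneg_nonneg add_nonneg_nonneg) auto
  ultimately show "(a + 2 * t)\<^sup>2 * (b + 2 * t) \<le> (a + 3 * t)\<^sup>2 * (b + t)"
    by linarith
qed

lemma square_times_cantor_upper_range:
  assumes "8/27 \<le> u" "u \<le> 1"
  shows "\<exists>x\<in>cantor_set. \<exists>y\<in>cantor_set. u = x\<^sup>2 * y"
proof -
  have overlaps: "a\<^sup>2 * (b + 2 * t) \<le> (a + t)\<^sup>2 * (b + t) \<and> (a + 2 * t)\<^sup>2 * b \<le> (a + t)\<^sup>2 * (b + 3 * t) \<and>
      (a + 2 * t)\<^sup>2 * (b + 2 * t) \<le> (a + 3 * t)\<^sup>2 * (b + t)"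
    if "2/3 \<le> a" "a + 3 * t \<le> 2/3 + 1/3" "2/3 \<le> b" "b + 3 * t \<le> 2/3 + 1/3" "0 < t" for a b t :: real
    using square_times_subsquare_overlaps[of t b a] that by simp
  have upper_third: "cantor_interval (2/3) (1/3)"
    using cantor_interval_right[OF cantor_interval_unit] by simp
  have cont: "continuous_on UNIV (\<lambda>p. (fst p)\<^sup>2 * snd p :: real)"
    by (intro continuous_intros)
  have "(2/3)\<^sup>2 * (2/3) \<le> u" "u \<le> (2/3 + 1/3)\<^sup>2 * (2/3 + 1/3 :: real)"
    using assms by (simp_all add: power2_eq_square)
  then obtain x y where "x \<in> cantor_set" "y \<in> cantor_set" "x\<^sup>2 * y = u"
    using cantor_squares_attain_value[where f = "\<lambda>x y. x\<^sup>2 * y", OF cont upper_third upper_third _ _ overlaps]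
    by blast
  then show ?thesis
    by auto
qed

lemma square_times_cantor_onto_unit:
  assumes "u \<in> {0..1::real}"
  shows "\<exists>x\<in>cantor_set. \<exists>y\<in>cantor_set. u = x\<^sup>2 * y"
proof (cases "u = 0")
  case True
  then show ?thesis
    using zero_in_cantor_set by (intro bexI[of _ 0]) auto
next
  case False
  then have "0 < u" "u \<le> 1"
    using assms by auto
  then obtain k :: nat where k: "1/3 < 3 ^ k * u" "3 ^ k * u \<le> 1"
    by (rule exists_power_of_three_scale)
  then obtain x y where xy: "x \<in> cantor_set" "y \<in> cantor_set" "3 ^ k * u = x\<^sup>2 * y"
    using square_times_cantor_upper_range[of "3 ^ k * u"] by auto
  have "u = 3 ^ k * u / 3 ^ k"
    by simp
  also have "\<dots> = x\<^sup>2 * (y / 3 ^ k)"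
    by (simp add: xy(3))
  finally show ?thesis
    using xy(1,2) cantor_set_div_power by blast
qed

section \<open>Quotients\<close>

lemma linear_subsquare_overlaps:
  fixes r t a b :: real
  assumes "0 \<le> t" "r \<le> 1" "1 \<le> 3 * r"
  shows "a + r * (b + 2 * t) \<le> (a + t) + r * (b + t)"
    and "(a + 2 * t) + r * b \<le> (a + t) + r * (b + 3 * t)"
    and "(a + 2 * t) + r * (b + 2 * t) \<le> (a + 3 * t) + r * (b + t)"
proof -
  have "r * t \<le> t" "t \<le> 3 * r * t"
    using assms mult_right_mono[of r 1 t] mult_right_mono[of 1 "3 * r" t] by simp_all
  then show "a + r * (b + 2 * t) \<le> (a + t) + r * (b + t)"
    and "(a + 2 * t) + r * b \<le> (a + t) + r * (b + 3 * t)"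
    and "(a + 2 * t) + r * (b + 2 * t) \<le> (a + 3 * t) + r * (b + t)"
    by (simp_all add: algebra_simps)
qed

text \<open>Solving \<open>x = r y\<close> directly would need a function decreasing in \<open>y\<close>; with \<open>y = 1 - y'\<close>
  (the Cantor set is symmetric) it becomes \<open>x + r y' = r\<close>, increasing in both variables.\<close>
lemma cantor_ratio_lower_range:
  assumes r: "2/3 \<le> r" "r \<le> 1"
  shows "\<exists>x\<in>cantor_set. \<exists>y\<in>cantor_set. 2/3 \<le> y \<and> x = r * y"
proof -
  have overlaps: "a + r * (b + 2 * t) \<le> (a + t) + r * (b + t) \<and> (a + 2 * t) + r * b \<le> (a + t) + r * (b + 3 * t) \<and>
      (a + 2 * t) + r * (b + 2 * t) \<le> (a + 3 * t) + r * (b + t)"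
    if "0 < t" for a b t :: real
    using linear_subsquare_overlaps[of t r a b] that r by simp
  have upper_third: "cantor_interval (2/3) (1/3)"
    using cantor_interval_right[OF cantor_interval_unit] by simp
  have lower_third: "cantor_interval 0 (1/3)"
    using cantor_interval_left[OF cantor_interval_unit] by simp
  have cont: "continuous_on UNIV (\<lambda>p. fst p + r * snd p)"
    by (intro continuous_intros)
  have "2/3 + r * 0 \<le> r" "r \<le> (2/3 + 1/3) + r * (0 + 1/3)"
    using r by simp_all
  then obtain x y where xy: "x \<in> cantor_set" "y \<in> cantor_set" "y \<le> 0 + 1/3" "x + r * y = r"
    using cantor_squares_attain_value[where f = "\<lambda>x y. x + r * y",
        OF cont upper_third lower_third _ _ overlaps]
    by blast
  have "1 - y \<in> cantor_set" "2/3 \<le> 1 - y" "x = r * (1 - y)"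
    using xy cantor_set_reflect by (simp_all add: algebra_simps)
  then show ?thesis
    using xy(1) by blast
qed

lemma cantor_ratio_range:
  assumes "2/3 \<le> r" "r \<le> 3/2"
  shows "\<exists>x\<in>cantor_set. \<exists>y\<in>cantor_set. y \<noteq> 0 \<and> x = r * y"
proof (cases "r \<le> 1")
  case True
  then obtain x y where xy: "x \<in> cantor_set" "y \<in> cantor_set" "2/3 \<le> y" "x = r * y"
    using cantor_ratio_lower_range[OF assms(1)] by blast
  then have "y \<noteq> 0"
    by auto
  with xy show ?thesis
    by (intro bexI[of _ x] bexI[of _ y]) simp_all
next
  case False
  then have "2/3 \<le> 1 / r" "1 / r \<le> 1"
    using assms(2) by (simp_all add: field_simps)
  then obtain x y where xy: "x \<in> cantor_set" "y \<in> cantor_set" "2/3 \<le> y" "x = 1 / r * y"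
    by (meson cantor_ratio_lower_range)
  have "0 < r"
    using False by simp
  then have "x \<noteq> 0" "y = r * x"
    unfolding xy(4) using xy(3) by simp_all
  with xy(1,2) show ?thesis
    by (intro bexI[of _ y] bexI[of _ x]) simp_all
qed

lemma powr_three_of_int_diff: "(3::real) powr real_of_int (int j - int i) = 3 ^ j / 3 ^ i"
  by (simp add: powr_diff powr_realpow)

lemma cantor_quotient_in_scaled_ranges:
  assumes "x \<in> cantor_set" "y \<in> cantor_set" "0 < x" "0 < y"
  shows "\<exists>m::int. x / y \<in> {2/3 * 3 powr real_of_int m .. 3/2 * 3 powr real_of_int m}"
proof -
  obtain i :: nat where i: "2/3 \<le> 3 ^ i * x" "3 ^ i * x \<le> 1"
    using cantor_set_normalize[OF assms(1,3)] by blast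
  obtain j :: nat where j: "2/3 \<le> 3 ^ j * y" "3 ^ j * y \<le> 1"
    using cantor_set_normalize[OF assms(2,4)] by blast
  define q where "q = (3 ^ i * x) / (3 ^ j * y)"
  define m where "m = int j - int i"
  have "2/3 \<le> q" "q \<le> 3/2"
    using i j by (auto simp: q_def field_simps)
  moreover have pos: "0 < (3::real) powr real_of_int m"
    by simp
  ultimately have "2/3 * 3 powr real_of_int m \<le> q * 3 powr real_of_int m"
      "q * 3 powr real_of_int m \<le> 3/2 * 3 powr real_of_int m"
    by (simp_all add: mult_right_mono)
  moreover have "x / y = q * 3 powr real_of_int m"
    unfolding m_def powr_three_of_int_diff q_def using assms(4) by (simp add: field_simps)
  ultimately show ?thesis
    by (intro exI[of _ m]) simp
qed

lemma scaled_ranges_in_cantor_quotients: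
  assumes "2/3 * 3 powr real_of_int m \<le> z" "z \<le> 3/2 * 3 powr real_of_int m"
  shows "z \<in> {x / y | x y. x \<in> cantor_set \<and> y \<in> cantor_set \<and> y \<noteq> 0}"
proof -
  define p where "p = (3::real) powr real_of_int m"
  have "0 < p"
    by (simp add: p_def)
  then have "2/3 \<le> z / p" "z / p \<le> 3/2"
    using assms by (simp_all add: p_def field_simps)
  then obtain x y where xy: "x \<in> cantor_set" "y \<in> cantor_set" "y \<noteq> 0" "x = z / p * y"
    using cantor_ratio_range by blast
  then have z: "z = x / y * p"
    using \<open>0 < p\<close> by (simp add: field_simps)
  show ?thesis
  proof (cases "0 \<le> m")
    case True
    then obtain n :: nat where "m = int n"
      using nonneg_int_cases by blast
    then have "p = 3 ^ n"
      using powr_three_of_int_diff[of n 0] by (simp add: p_def)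
    then have "z = x / (y / 3 ^ n)"
      unfolding z by simp
    moreover have "y / 3 ^ n \<in> cantor_set" "y / 3 ^ n \<noteq> 0"
      using xy(2,3) cantor_set_div_power by simp_all
    ultimately show ?thesis
      using xy(1) by blast
  next
    case False
    define n where "n = nat (- m)"
    then have "m = - int n"
      using False by simp
    then have "p = 1 / 3 ^ n"
      using powr_three_of_int_diff[of 0 n] by (simp add: p_def)
    then have "z = (x / 3 ^ n) / y"
      unfolding z by simp
    moreover have "x / 3 ^ n \<in> cantor_set"
      using xy(1) by (rule cantor_set_div_power)
    ultimately show ?thesis
      using xy(2,3) by blast
  qed
qed

lemma cantor_quotients_eq:
  "{x / y | x y. x \<in> cantor_set \<and> y \<in> cantor_set \<and> y \<noteq> 0}
     = insert 0 (\<Union>m::int. {2/3 * 3 powr real_of_int m .. 3/2 * 3 powr real_of_int m})"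
proof (intro equalityI subsetI)
  fix z
  assume "z \<in> {x / y | x y. x \<in> cantor_set \<and> y \<in> cantor_set \<and> y \<noteq> 0}"
  then obtain x y where xy: "x \<in> cantor_set" "y \<in> cantor_set" "y \<noteq> 0" "z = x / y"
    by blast
  show "z \<in> insert 0 (\<Union>m::int. {2/3 * 3 powr real_of_int m .. 3/2 * 3 powr real_of_int m})"
  proof (cases "x = 0")
    case False
    have "0 \<le> x" "0 \<le> y"
      using xy(1,2) cantor_set_subset_unit by auto
    then have "0 < x" "0 < y"
      using False xy(3) by simp_all
    then show ?thesis
      using cantor_quotient_in_scaled_ranges[OF xy(1,2)] xy(4) by blast
  qed (simp add: xy(4))
next
  fix z
  assume "z \<in> insert 0 (\<Union>m::int. {2/3 * 3 powr real_of_int m .. 3/2 * 3 powr real_of_int m})"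
  then consider "z = 0" | m :: int where "2/3 * 3 powr real_of_int m \<le> z" "z \<le> 3/2 * 3 powr real_of_int m"
    by auto
  then show "z \<in> {x / y | x y. x \<in> cantor_set \<and> y \<in> cantor_set \<and> y \<noteq> 0}"
  proof cases
    case 1
    then show ?thesis
      using zero_in_cantor_set one_in_cantor_set by (intro CollectI exI[of _ 0] exI[of _ 1]) simp
  next
    case 2
    then show ?thesis
      by (rule scaled_ranges_in_cantor_quotients)
  qed
qed

section \<open>Products\<close>

definition cantor_products :: "real \<Rightarrow> real \<Rightarrow> real set" where
  "cantor_products a s = (\<lambda>(x, y). x * y) ` ((cantor_set \<inter> {a..a + s}) \<times> (cantor_set \<inter> {a..a + s}))"

lemma cantor_products_unit: "cantor_products 0 1 = {x * y | x y. x \<in> cantor_set \<and> y \<in> cantor_set}"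
  using cantor_set_subset_unit by (auto simp: cantor_products_def)

lemma compact_cantor_products: "compact (cantor_products a s)"
proof -
  have "compact (cantor_set \<inter> {a..a + s})"
    using compact_cantor_set by (intro compact_Int_closed) auto
  then show ?thesis
    unfolding cantor_products_def
    by (intro compact_continuous_image compact_Times) (auto intro!: continuous_intros simp: case_prod_unfold)
qed

lemma lmeasurable_cantor_products: "cantor_products a s \<in> lmeasurable"
  by (rule lmeasurable_compact[OF compact_cantor_products])

lemma cantor_products_mono: "a \<le> a' \<Longrightarrow> a' + s' \<le> a + s \<Longrightarrow> cantor_products a' s' \<subseteq> cantor_products a s"
  unfolding cantor_products_def by (intro image_mono Sigma_mono) auto

lemma cantor_products_subset:
  assumes "0 \<le> a"
  shows "cantor_products a s \<subseteq> {a\<^sup>2 .. (a + s)\<^sup>2}"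
proof
  fix z
  assume "z \<in> cantor_products a s"
  then obtain x y where xy: "z = x * y" "a \<le> x" "x \<le> a + s" "a \<le> y" "y \<le> a + s"
    unfolding cantor_products_def by auto
  have "a * a \<le> x * y" "x * y \<le> (a + s) * (a + s)"
    using xy assms by (auto intro: mult_mono)
  then show "z \<in> {a\<^sup>2 .. (a + s)\<^sup>2}"
    using xy(1) by (simp add: power2_eq_square)
qed

lemma product_subsquare_overlaps:
  fixes a b t :: real
  assumes "0 \<le> t" "a + t \<le> b" "b \<le> 3 * a"
  shows "a * (b + 2 * t) \<le> (a + t) * (b + t)"
    and "(a + 2 * t) * b \<le> (a + t) * (b + 3 * t)"
    and "(a + 2 * t) * (b + 2 * t) \<le> (a + 3 * t) * (b + t)"
proof -
  have "0 \<le> t * (b - a + t)" "0 \<le> t * (3 * a - b + 3 * t)" "0 \<le> t * (b - a - t)"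
    using assms by simp_all
  then show "a * (b + 2 * t) \<le> (a + t) * (b + t)"
    and "(a + 2 * t) * b \<le> (a + t) * (b + 3 * t)"
    and "(a + 2 * t) * (b + 2 * t) \<le> (a + 3 * t) * (b + t)"
    by (simp_all add: algebra_simps)
qed

lemma interval_subset_cantor_products:
  assumes interval: "cantor_interval a (3 * t)" and small: "3 * t \<le> 2 * a"
  shows "{a * (a + 2 * t) .. (a + t) * (a + 3 * t)} \<subseteq> cantor_products a (3 * t)"
proof
  fix u
  assume u: "u \<in> {a * (a + 2 * t) .. (a + t) * (a + 3 * t)}"
  have left: "cantor_interval a t" and right: "cantor_interval (a + 2 * t) t"
    using cantor_interval_left[OF interval] cantor_interval_right[OF interval] by simp_all
  have overlaps: "a' * (b' + 2 * t') \<le> (a' + t') * (b' + t') \<and> (a' + 2 * t') * b' \<le> (a' + t') * (b' + 3 * t') \<and>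
      (a' + 2 * t') * (b' + 2 * t') \<le> (a' + 3 * t') * (b' + t')"
    if "a \<le> a'" "a' + 3 * t' \<le> a + t" "a + 2 * t \<le> b'" "b' + 3 * t' \<le> a + 2 * t + t" "0 < t'" for a' b' t'
    using product_subsquare_overlaps[of t' a' b'] that small by simp
  have cont: "continuous_on UNIV (\<lambda>p. fst p * snd p :: real)"
    by (intro continuous_intros)
  have "a * (a + 2 * t) \<le> u" "u \<le> (a + t) * (a + 2 * t + t)"
    using u by (simp_all add: algebra_simps)
  then obtain x y where "x \<in> cantor_set" "y \<in> cantor_set" "a \<le> x" "x \<le> a + t"
      "a + 2 * t \<le> y" "y \<le> a + 2 * t + t" "x * y = u"
    using cantor_squares_attain_value[where f = "\<lambda>x y. x * y", OF cont left right _ _ overlaps]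
    by blast
  moreover have "0 < t"
    using cantor_interval_pos[OF left] .
  ultimately show "u \<in> cantor_products a (3 * t)"
    unfolding cantor_products_def by (intro image_eqI[of _ _ "(x, y)"]) auto
qed

text \<open>One step of the self-similar lower bound: the products from the left third below
  \<open>a (a + 2t)\<close>, the interval of the previous lemma and the products from the right third are
  disjoint parts of the products from the whole interval.\<close>
lemma cantor_products_measure_split:
  assumes interval: "cantor_interval a (3 * t)" and small: "3 * t \<le> 2 * a"
  shows "measure lebesgue (cantor_products a t) - measure lebesgue (cantor_products a t \<inter> {a * (a + 2 * t)..})
      + ((a + t) * (a + 3 * t) - a * (a + 2 * t)) + measure lebesgue (cantor_products (a + 2 * t) t)
      \<le> measure lebesgue (cantor_products a (3 * t))"
proof -
  define c where "c = a * (a + 2 * t)"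
  define d where "d = (a + t) * (a + 3 * t)"
  define L where "L = cantor_products a t \<inter> {..<c}"
  define R where "R = cantor_products (a + 2 * t) t"
  have t: "0 < t"
    using cantor_interval_pos[OF interval] by simp
  have a: "0 \<le> a"
    using t small by simp
  have "{..<c} \<in> sets lebesgue"
    by (rule sets_completionI_sets) (simp add: borel_open)
  then have "L \<in> lmeasurable"
    unfolding L_def by (rule fmeasurable_Int_fmeasurable[OF lmeasurable_cantor_products])
  moreover have "{c..d} \<in> lmeasurable" "R \<in> lmeasurable" "cantor_products a t \<inter> {c..} \<in> lmeasurable"
    using compact_cantor_products
    by (auto simp: R_def intro!: lmeasurable_compact compact_Int_closed lmeasurable_cantor_products)
  ultimately have meas: "L \<in> lmeasurable" "{c..d} \<in> lmeasurable" "R \<in> lmeasurable"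
      "cantor_products a t \<inter> {c..} \<in> lmeasurable"
    by blast+
  have "measure lebesgue (cantor_products a t) \<le> measure lebesgue L + measure lebesgue (cantor_products a t \<inter> {c..})"
  proof -
    have "measure lebesgue (L \<union> (cantor_products a t \<inter> {c..}))
        \<le> measure lebesgue L + measure lebesgue (cantor_products a t \<inter> {c..})"
      using meas by (intro measure_Un_le) (simp_all add: fmeasurableD)
    moreover have "L \<union> (cantor_products a t \<inter> {c..}) = cantor_products a t"
      by (auto simp: L_def)
    ultimately show ?thesis
      by simp
  qed
  moreover have "measure lebesgue (L \<union> {c..d} \<union> R) = measure lebesgue L + (d - c) + measure lebesgue R"
  proof -
    have "c \<le> d" "d < (a + 2 * t)\<^sup>2"
      using a t by (simp_all add: c_def d_def power2_eq_square algebra_simps)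
    moreover have "R \<subseteq> {(a + 2 * t)\<^sup>2..}"
      using cantor_products_subset[of "a + 2 * t" t] a t by (auto simp: R_def)
    ultimately have "L \<inter> {c..d} = {}" "L \<inter> R = {}" "{c..d} \<inter> R = {}"
      by (fastforce simp: L_def)+
    then show ?thesis
      using measure_Un3_negligible[OF meas(1-3) _ _ _ refl] \<open>c \<le> d\<close> by simp
  qed
  moreover have "measure lebesgue (L \<union> {c..d} \<union> R) \<le> measure lebesgue (cantor_products a (3 * t))"
  proof (rule measure_mono_fmeasurable[OF _ _ lmeasurable_cantor_products])
    show "L \<union> {c..d} \<union> R \<subseteq> cantor_products a (3 * t)"
      using interval_subset_cantor_products[OF interval small]
        cantor_products_mono[of a a t "3 * t"] cantor_products_mono[of a "a + 2 * t" t "3 * t"] t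
      by (auto simp: L_def R_def c_def d_def)
    show "L \<union> {c..d} \<union> R \<in> sets lebesgue"
      using meas by (intro sets.Un) (simp_all add: fmeasurableD)
  qed
  ultimately show ?thesis
    unfolding c_def[symmetric] d_def[symmetric] R_def[symmetric] by linarith
qed

lemma measure_cantor_products_top_le:
  assumes "0 \<le> a" "0 \<le> t"
  shows "measure lebesgue (cantor_products a t \<inter> {a * (a + 2 * t)..}) \<le> t\<^sup>2"
proof -
  have "measure lebesgue (cantor_products a t \<inter> {a * (a + 2 * t)..}) \<le> measure lebesgue {a * (a + 2 * t) .. (a + t)\<^sup>2}"
    using cantor_products_subset[OF assms(1), of t]
    by (intro measure_mono_fmeasurable) (auto intro!: fmeasurableD lmeasurable_compact compact_Int_closed compact_cantor_products)
  moreover have "a * (a + 2 * t) \<le> (a + t)\<^sup>2" "(a + t)\<^sup>2 - a * (a + 2 * t) = t\<^sup>2"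
    by (simp_all add: power2_eq_square algebra_simps)
  ultimately show ?thesis
    by simp
qed

lemma cantor_products_measure_ge_approx:
  assumes "cantor_interval a s" "s \<le> 2 * a"
  shows "(a + s)\<^sup>2 - a\<^sup>2 - s\<^sup>2 / 7 - 3 * s * (2/3) ^ N \<le> measure lebesgue (cantor_products a s)"
  using assms
proof (induction N arbitrary: a s)
  case 0
  have "0 < s" "a + s \<le> 1"
    using cantor_interval_pos[OF 0(1)] cantor_interval_endpoints[OF 0(1)] cantor_set_subset_unit
    by auto
  then have "s * (a + s) \<le> s"
    using mult_left_mono[of "a + s" 1 s] by simp
  moreover have "(a + s)\<^sup>2 - a\<^sup>2 - s\<^sup>2 / 7 - 3 * s = 2 * (s * (a + s)) - 8/7 * s\<^sup>2 - 3 * s"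
    by (simp add: power2_eq_square algebra_simps)
  ultimately have "(a + s)\<^sup>2 - a\<^sup>2 - s\<^sup>2 / 7 - 3 * s \<le> 0"
    using \<open>0 < s\<close> zero_le_power2[of s] by linarith
  moreover have "0 \<le> measure lebesgue (cantor_products a s)" "3 * s * (2/3) ^ 0 = 3 * s"
    by simp_all
  ultimately show ?case
    by linarith
next
  case (Suc N)
  define t where "t = s / 3"
  have s: "s = 3 * t"
    by (simp add: t_def)
  have t: "0 < t"
    using cantor_interval_pos[OF Suc.prems(1)] by (simp add: t_def)
  have "(a + t)\<^sup>2 - a\<^sup>2 - t\<^sup>2 / 7 - 3 * t * (2/3) ^ N \<le> measure lebesgue (cantor_products a t)"
    using Suc.IH[of a t] cantor_interval_left[OF Suc.prems(1)] Suc.prems(2) t by (simp add: t_def)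
  moreover have "(a + 2 * t + t)\<^sup>2 - (a + 2 * t)\<^sup>2 - t\<^sup>2 / 7 - 3 * t * (2/3) ^ N
      \<le> measure lebesgue (cantor_products (a + 2 * t) t)"
    using Suc.IH[of "a + 2 * t" t] cantor_interval_right[OF Suc.prems(1)] Suc.prems(2) t
    by (simp add: t_def)
  moreover have "measure lebesgue (cantor_products a t \<inter> {a * (a + 2 * t)..}) \<le> t\<^sup>2"
    using measure_cantor_products_top_le[of a t] Suc.prems(2) s t by simp
  moreover note cantor_products_measure_split[of a t] Suc.prems
  moreover have "((a + t)\<^sup>2 - a\<^sup>2 - t\<^sup>2 / 7 - 3 * t * (2/3) ^ N) - t\<^sup>2 + ((a + t) * (a + 3 * t) - a * (a + 2 * t))
      + ((a + 2 * t + t)\<^sup>2 - (a + 2 * t)\<^sup>2 - t\<^sup>2 / 7 - 3 * t * (2/3) ^ N)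
      = (a + s)\<^sup>2 - a\<^sup>2 - s\<^sup>2 / 7 - 3 * s * (2/3) ^ Suc N"
    by (simp add: s power2_eq_square algebra_simps)
  ultimately show ?case
    unfolding s by linarith
qed

lemma cantor_products_measure_ge:
  assumes "cantor_interval a s" "s \<le> 2 * a"
  shows "(a + s)\<^sup>2 - a\<^sup>2 - s\<^sup>2 / 7 \<le> measure lebesgue (cantor_products a s)"
proof -
  have "(\<lambda>N. (a + s)\<^sup>2 - a\<^sup>2 - s\<^sup>2 / 7 - 3 * s * (2/3::real) ^ N) \<longlonglongrightarrow> (a + s)\<^sup>2 - a\<^sup>2 - s\<^sup>2 / 7 - 3 * s * 0"
    by (intro tendsto_intros LIMSEQ_power_zero) simp
  then have "(a + s)\<^sup>2 - a\<^sup>2 - s\<^sup>2 / 7 - 3 * s * 0 \<le> measure lebesgue (cantor_products a s)"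
    by (rule LIMSEQ_le_const2) (use cantor_products_measure_ge_approx[OF assms] in blast)
  then show ?thesis
    by simp
qed

text \<open>The one explicit gap among the products that makes the inequality of the theorem strict:
  a point in the left part of \<open>[2/3, 7/9]\<close> pushes its partner above \<open>188/243\<close>, and
  \<open>(188/243)\<^sup>2 = 35344/59049\<close>.\<close>
lemma cantor_products_gap:
  assumes x: "x \<in> cantor_set" "2/3 \<le> x" "x \<le> 7/9" and y: "y \<in> cantor_set" "2/3 \<le> y" "y \<le> 7/9"
  shows "x * y \<le> 35343/59049 \<or> 35344/59049 \<le> x * y"
proof (rule ccontr)
  assume "\<not> ?thesis"
  then have xy: "35343/59049 < x * y" "x * y < 35344/59049"
    by auto
  have i1: "cantor_interval (2/3) (1/9)"
    using cantor_interval_left[OF cantor_interval_right[OF cantor_interval_unit]] by simp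
  have i2: "cantor_interval (20/27) (1/27)"
    using cantor_interval_right[OF i1] by simp
  have i3: "cantor_interval (62/81) (1/81)"
    using cantor_interval_right[OF i2] by simp
  have large: "188/243 \<le> z"
    if z: "z \<in> cantor_set" "2/3 \<le> z" "z \<le> 7/9" "35343/59049 < z * w" "0 \<le> w" "w \<le> 7/9" for z w
  proof -
    have "z * w \<le> z * (7/9)"
      using z by (intro mult_left_mono) auto
    then have "61/81 < z"
      using z(4) by linarith
    then have "20/27 \<le> z"
      using cantor_interval_gap[OF i1 z(1)] z(2,3) by simp
    then have "62/81 \<le> z"
      using cantor_interval_gap[OF i2 z(1)] z(3) \<open>61/81 < z\<close> by simp
    moreover have "\<not> z \<le> 62/81 + 1/81/3"
    proof
      assume "z \<le> 62/81 + 1/81/3"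
      then have "z * w \<le> (187/243) * (7/9)"
        using z by (intro mult_mono) auto
      then show False
        using z(4) by simp
    qed
    ultimately show ?thesis
      using cantor_interval_gap[OF i3 z(1)] z(3) by simp
  qed
  have "188/243 \<le> x" "188/243 \<le> y"
    using large[of x y] large[of y x] x y xy(1) by (simp_all add: mult.commute)
  then have "(188/243) * (188/243) \<le> x * y"
    by (intro mult_mono) auto
  then show False
    using xy(2) by simp
qed

lemma measure_cantor_products_upper_third_gt: "34/63 < measure lebesgue (cantor_products (2/3) (1/3))"
proof -
  have upper_third: "cantor_interval (2/3) (3 * (1/9))"
    using cantor_interval_right[OF cantor_interval_unit] by simp
  have i1: "cantor_interval (2/3) (1/9)" and i2: "cantor_interval (8/9) (1/9)"
    using cantor_interval_left[OF upper_third] cantor_interval_right[OF upper_third] by simp_all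
  have "13/81 - 1/567 \<le> measure lebesgue (cantor_products (2/3) (1/9))"
    using cantor_products_measure_ge[OF i1] by (simp add: power2_eq_square)
  moreover have "17/81 - 1/567 \<le> measure lebesgue (cantor_products (8/9) (1/9))"
    using cantor_products_measure_ge[OF i2] by (simp add: power2_eq_square)
  moreover have "measure lebesgue (cantor_products (2/3) (1/9) \<inter> {16/27..}) \<le> 728/59049"
  proof -
    have "cantor_products (2/3) (1/9) \<inter> {16/27..} \<subseteq> {16/27 .. 35343/59049} \<union> {35344/59049 .. 49/81}"
    proof
      fix z
      assume z: "z \<in> cantor_products (2/3) (1/9) \<inter> {16/27..}"
      then obtain x y where "z = x * y" "x \<in> cantor_set" "2/3 \<le> x" "x \<le> 7/9"
          "y \<in> cantor_set" "2/3 \<le> y" "y \<le> 7/9"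
        unfolding cantor_products_def by auto
      moreover have "z \<le> 49/81"
        using z cantor_products_subset[of "2/3" "1/9"] by (auto simp: power2_eq_square)
      ultimately show "z \<in> {16/27 .. 35343/59049} \<union> {35344/59049 .. 49/81}"
        using cantor_products_gap z by auto
    qed
    then have "measure lebesgue (cantor_products (2/3) (1/9) \<inter> {16/27..})
        \<le> measure lebesgue ({16/27 .. 35343/59049} \<union> {35344/59049 .. 49/81::real})"
      by (intro measure_mono_fmeasurable)
         (auto intro!: fmeasurableD lmeasurable_compact compact_Int_closed compact_cantor_products)
    also have "\<dots> \<le> measure lebesgue {16/27 .. 35343/59049::real} + measure lebesgue {35344/59049 .. 49/81::real}"
      by (rule measure_Un_le) auto
    also have "\<dots> = 728/59049"
      by simp
    finally show ?thesis .
  qed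
  moreover have "measure lebesgue (cantor_products (2/3) (1/9))
      - measure lebesgue (cantor_products (2/3) (1/9) \<inter> {16/27..})
      + 15/81 + measure lebesgue (cantor_products (8/9) (1/9))
      \<le> measure lebesgue (cantor_products (2/3) (1/3))"
    using cantor_products_measure_split[OF upper_third] by simp
  ultimately show ?thesis
    by linarith
qed

lemma measure_cantor_products_gt: "17/21 < measure lebesgue (cantor_products 0 1)"
proof -
  define P where "P = cantor_products 0 1"
  define E where "E = cantor_products (2/3) (1/3)"
  define Q where "Q = (\<lambda>z. (1/3) *\<^sub>R z + 0) ` P"
  have P: "P \<in> lmeasurable" "P \<subseteq> {0..1}"
    using lmeasurable_cantor_products cantor_products_subset[of 0 1] by (simp_all add: P_def)
  have E: "E \<in> lmeasurable" "E \<subseteq> P" "E \<subseteq> {4/9..}"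
    using lmeasurable_cantor_products cantor_products_mono[of 0 "2/3" "1/3" 1]
      cantor_products_subset[of "2/3" "1/3"]
    by (auto simp: E_def P_def power2_eq_square)
  have Q: "Q \<in> lmeasurable" "Q \<subseteq> {..1/3}" "measure lebesgue Q = measure lebesgue P / 3"
    using P measure_lebesgue_affine[of "1/3" 0 P]
    by (auto simp: Q_def intro!: lmeasurable_compact compact_continuous_image continuous_intros
        compact_cantor_products simp: P_def)
  have "Q \<subseteq> P"
  proof
    fix z
    assume "z \<in> Q"
    then obtain w where "w \<in> P" "z = w / 3"
      by (auto simp: Q_def)
    then obtain x y where "x \<in> cantor_set" "y \<in> cantor_set" "z = x * (y / 3)"
      unfolding P_def cantor_products_unit by auto
    then show "z \<in> P"
      unfolding P_def cantor_products_unit using cantor_set_div3 by blast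
  qed
  have "E \<inter> Q = {}"
    using E(3) Q(2) by fastforce
  then have "measure lebesgue (E \<union> Q) = measure lebesgue E + measure lebesgue Q"
    using measure_Un3[OF E(1) Q(1)] by simp
  moreover have "measure lebesgue (E \<union> Q) \<le> measure lebesgue P"
    using E Q \<open>Q \<subseteq> P\<close> P(1) by (intro measure_mono_fmeasurable) (auto intro: fmeasurableD)
  moreover have "34/63 < measure lebesgue E"
    unfolding E_def by (rule measure_cantor_products_upper_third_gt)
  ultimately show ?thesis
    using Q(3) unfolding P_def by linarith
qed

theorem theorem1p1:
  shows "(\<forall>u \<in> {0..1::real}. \<exists>x \<in> cantor_set. \<exists>y \<in> cantor_set. u = x ^ 2 * y)
       \<and> {x / y | x y. x \<in> cantor_set \<and> y \<in> cantor_set \<and> y \<noteq> 0}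
           = insert 0 (\<Union>m::int. {2/3 * 3 powr (real_of_int m) .. 3/2 * 3 powr (real_of_int m)})
       \<and> closed {x * y | x y. x \<in> cantor_set \<and> y \<in> cantor_set}
       \<and> {x * y | x y. x \<in> cantor_set \<and> y \<in> cantor_set} \<subseteq> {0..1}
       \<and> measure lebesgue {x * y | x y. x \<in> cantor_set \<and> y \<in> cantor_set} > 17 / 21"
proof (intro conjI)
  show "\<forall>u \<in> {0..1::real}. \<exists>x \<in> cantor_set. \<exists>y \<in> cantor_set. u = x ^ 2 * y"
    using square_times_cantor_onto_unit by blast
  show "{x / y | x y. x \<in> cantor_set \<and> y \<in> cantor_set \<and> y \<noteq> 0}
      = insert 0 (\<Union>m::int. {2/3 * 3 powr (real_of_int m) .. 3/2 * 3 powr (real_of_int m)})"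
    by (rule cantor_quotients_eq)
  show "closed {x * y | x y. x \<in> cantor_set \<and> y \<in> cantor_set}"
    unfolding cantor_products_unit[symmetric] by (rule compact_imp_closed[OF compact_cantor_products])
  show "{x * y | x y. x \<in> cantor_set \<and> y \<in> cantor_set} \<subseteq> {0..1}"
    using cantor_products_subset[of 0 1] unfolding cantor_products_unit by simp
  show "measure lebesgue {x * y | x y. x \<in> cantor_set \<and> y \<in> cantor_set} > 17 / 21"
    using measure_cantor_products_gt unfolding cantor_products_unit by simp
qed

end
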